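(* Let $(V,\omega)$ be a symplectic space over $\mathbb F_q$ and $\overline V=(V,-\omega)$. Let $r:H(V)\to H(\overline V)$, $r(v,z)=(v,-z)$ (a group isomorphism), and for $L^\circ\in OLag(V)=OLag(\overline V)$ let $r^*_{L^\circ}:\mathcal H_{L^\circ}(\overline V,\psi)\to\mathcal H_{L^\circ}(V,\psi^{-1})$, $f\mapsto f\circ r$. Let $\overline T$ be the canonical trivialization for $(\overline V,\psi)$ and $T$ the canonical trivialization for $(V,\psi^{-1})$. Then for all $(M^\circ,L^\circ)\in OLag(V)^2$, $$r^*_{M^\circ}\circ\overline T_{M^\circ,L^\circ}=T_{M^\circ,L^\circ}\circ r^*_{L^\circ}.$$
   Context: $q$ is a power of an odd prime. For a symplectic space $(V,\omega)$ of dimension $2n$ over $\mathbb F_q$ and a non-trivial character $\psi$ of $\mathbb F_q$: $H(V)$ is $V\times\mathbb F_q$ with $(v,z)(v',z')=(v+v',z+z'+\tfrac12\omega(v,v'))$; an oriented Lagrangian is $L^\circ=(L,o_L)$ with $L$ Lagrangian and $o_L\in\bigwedge^nL$ nonzero, $OLag(V)$ their set; $\mathcal H_{L^\circ}(V,\psi)$ is the space of $f:H(V)\to\mathbb C$ with $f((0,z)(l,0)h)=\psi(z)f(h)$ ($z\in\mathbb F_q,l\in L,h\in H(V)$), with $H(V)$ acting by right translation. $\omega_\wedge(a_1\wedge\dots\wedge a_n,b_1\wedge\dots\wedge b_n)=(-1)^{n(n-1)/2}\det(\omega(a_i,b_j))$ (computed with the form of the space in question); $\sigma$ the Legendre character;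 $G_1(\psi)=\sum_z\psi(\tfrac12z^2)$. For $M+L=V$ set $T^0_{M^\circ,L^\circ}f(h)=(G_1(\psi)/q)^n\sigma((-1)^{n(n-1)/2}\omega_\wedge(o_L,o_M))\sum_{m\in M}f((m,0)h)$. The canonical trivialization for $(V,\psi)$ is the unique family of $H(V)$-intertwining isomorphisms $T_{M^\circ,L^\circ}:\mathcal H_{L^\circ}(V,\psi)\to\mathcal H_{M^\circ}(V,\psi)$, $(M^\circ,L^\circ)\in OLag(V)^2$, with $T_{N^\circ,M^\circ}T_{M^\circ,L^\circ}=T_{N^\circ,L^\circ}$ for all triples and $T=T^0$ on pairs in general position. *)

theory Defs
  imports Complex_Main "HOL-Combinatorics.Permutations"
begin

text \<open>The symplectic space V is the whole carrier type 'v, a vector space over the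
finite field 'k via the scalar multiplication scale.\<close>

definition symplectic_form :: "('k::field \<Rightarrow> 'v::ab_group_add \<Rightarrow> 'v) \<Rightarrow> ('v \<Rightarrow> 'v \<Rightarrow> 'k) \<Rightarrow> bool" where
  "symplectic_form scale \<omega> \<longleftrightarrow>
     (\<forall>x y z. \<omega> (x + y) z = \<omega> x z + \<omega> y z) \<and>
     (\<forall>x y z. \<omega> x (y + z) = \<omega> x y + \<omega> x z) \<and>
     (\<forall>c x y. \<omega> (scale c x) y = c * \<omega> x y) \<and>
     (\<forall>c x y. \<omega> x (scale c y) = c * \<omega> x y) \<and>
     (\<forall>x. \<omega> x x = 0) \<and>
     (\<forall>x. (\<forall>y. \<omega> x y = 0) \<longrightarrow> x = 0)"

definition half_dim :: "('k::field \<Rightarrow> 'v::ab_group_add \<Rightarrow> 'v) \<Rightarrow> nat" where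
  "half_dim scale = vector_space.dim scale (UNIV :: 'v set) div 2"

definition lagrangian :: "('k::field \<Rightarrow> 'v::ab_group_add \<Rightarrow> 'v) \<Rightarrow> ('v \<Rightarrow> 'v \<Rightarrow> 'k) \<Rightarrow> 'v set \<Rightarrow> bool" where
  "lagrangian scale \<omega> L \<longleftrightarrow> module.subspace scale L \<and> L = {v. \<forall>w\<in>L. \<omega> v w = 0}"

definition basis_list :: "('k::field \<Rightarrow> 'v::ab_group_add \<Rightarrow> 'v) \<Rightarrow> 'v set \<Rightarrow> 'v list \<Rightarrow> bool" where
  "basis_list scale L a \<longleftrightarrow> distinct a \<and> \<not> module.dependent scale (set a) \<and>
     module.span scale (set a) = L"

definition alt_multilinear :: "('k::field \<Rightarrow> 'v::ab_group_add \<Rightarrow> 'v) \<Rightarrow> 'v set \<Rightarrow> nat \<Rightarrow> ('v list \<Rightarrow> 'k) \<Rightarrow> bool" where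
  "alt_multilinear scale L n \<phi> \<longleftrightarrow>
     (\<forall>xs i u w. length xs = n \<and> set xs \<subseteq> L \<and> i < n \<and> u \<in> L \<and> w \<in> L \<longrightarrow>
         \<phi> (xs[i := u + w]) = \<phi> (xs[i := u]) + \<phi> (xs[i := w])) \<and>
     (\<forall>xs i u c. length xs = n \<and> set xs \<subseteq> L \<and> i < n \<and> u \<in> L \<longrightarrow>
         \<phi> (xs[i := scale c u]) = c * \<phi> (xs[i := u])) \<and>
     (\<forall>xs i j. length xs = n \<and> set xs \<subseteq> L \<and> i < j \<and> j < n \<and> xs ! i = xs ! j \<longrightarrow> \<phi> xs = 0)"

text \<open>The element a_1 \<and> ... \<and> a_n of the top exterior power of L, represented through the
canonical identification of the top exterior power with the dual of the space of
alternating n-forms on L: it is the evaluation functional at (a_1,...,a_n).\<close>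
definition wedge :: "('k::field \<Rightarrow> 'v::ab_group_add \<Rightarrow> 'v) \<Rightarrow> 'v set \<Rightarrow> 'v list \<Rightarrow> ('v list \<Rightarrow> 'k) \<Rightarrow> 'k" where
  "wedge scale L a = (\<lambda>\<phi>. if alt_multilinear scale L (length a) \<phi> then \<phi> a else 0)"

type_synonym ('v, 'k) orientation = "('v list \<Rightarrow> 'k) \<Rightarrow> 'k"
type_synonym ('v, 'k) olag = "'v set \<times> ('v, 'k) orientation"

text \<open>Nonzero elements of the top exterior power of L: c \<cdot> a_1 \<and> ... \<and> a_n, c \<noteq> 0, a a basis.\<close>
definition orientations :: "('k::field \<Rightarrow> 'v::ab_group_add \<Rightarrow> 'v) \<Rightarrow> 'v set \<Rightarrow> ('v, 'k) orientation set" where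
  "orientations scale L = {(\<lambda>\<phi>. c * wedge scale L a \<phi>) | c a. c \<noteq> 0 \<and> basis_list scale L a}"

definition OLag :: "('k::field \<Rightarrow> 'v::ab_group_add \<Rightarrow> 'v) \<Rightarrow> ('v \<Rightarrow> 'v \<Rightarrow> 'k) \<Rightarrow> ('v, 'k) olag set" where
  "OLag scale \<omega> = {(L, or). lagrangian scale \<omega> L \<and> or \<in> orientations scale L}"

definition gram_det :: "('v \<Rightarrow> 'v \<Rightarrow> 'k::field) \<Rightarrow> nat \<Rightarrow> 'v list \<Rightarrow> 'v list \<Rightarrow> 'k" where
  "gram_det \<omega> n a b = (\<Sum>p | p permutes {..<n}. of_int (sign p) * (\<Prod>i<n. \<omega> (a ! i) (b ! (p i))))"

definition omega_wedge :: "('k::field \<Rightarrow> 'v::ab_group_add \<Rightarrow> 'v) \<Rightarrow> ('v \<Rightarrow> 'v \<Rightarrow> 'k) \<Rightarrow> ('v, 'k) olag \<Rightarrow> ('v, 'k) olag \<Rightarrow> 'k" where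
  "omega_wedge scale \<omega> A B = (SOME x. \<exists>c a d b.
      snd A = (\<lambda>\<phi>. c * wedge scale (fst A) a \<phi>) \<and> basis_list scale (fst A) a \<and>
      snd B = (\<lambda>\<phi>. d * wedge scale (fst B) b \<phi>) \<and> basis_list scale (fst B) b \<and>
      x = c * d * (-1) ^ (length a * (length a - 1) div 2) * gram_det \<omega> (length a) a b)"

definition nontrivial_char :: "('k::field \<Rightarrow> complex) \<Rightarrow> bool" where
  "nontrivial_char \<psi> \<longleftrightarrow> (\<forall>x y. \<psi> (x + y) = \<psi> x * \<psi> y) \<and> (\<forall>x. \<psi> x \<noteq> 0) \<and> (\<exists>x. \<psi> x \<noteq> 1)"

definition gauss1 :: "('k::{field,finite} \<Rightarrow> complex) \<Rightarrow> complex" where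
  "gauss1 \<psi> = (\<Sum>z\<in>UNIV. \<psi> (z * z / 2))"

definition legendre_char :: "'k::field \<Rightarrow> complex" where
  "legendre_char x = (if x = 0 then 0 else if \<exists>y. y * y = x then 1 else -1)"

definition hmul :: "('v::ab_group_add \<Rightarrow> 'v \<Rightarrow> 'k::field) \<Rightarrow> 'v \<times> 'k \<Rightarrow> 'v \<times> 'k \<Rightarrow> 'v \<times> 'k" where
  "hmul \<omega> g h = (fst g + fst h, snd g + snd h + \<omega> (fst g) (fst h) / 2)"

type_synonym ('v, 'k) hfun = "'v \<times> 'k \<Rightarrow> complex"

definition Hsp :: "('v::ab_group_add \<Rightarrow> 'v \<Rightarrow> 'k::field) \<Rightarrow> ('k \<Rightarrow> complex) \<Rightarrow> 'v set \<Rightarrow> ('v, 'k) hfun set" where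
  "Hsp \<omega> \<psi> L = {f. \<forall>z l h. l \<in> L \<longrightarrow> f (hmul \<omega> (0, z) (hmul \<omega> (l, 0) h)) = \<psi> z * f h}"

definition rtrans :: "('v::ab_group_add \<Rightarrow> 'v \<Rightarrow> 'k::field) \<Rightarrow> 'v \<times> 'k \<Rightarrow> ('v, 'k) hfun \<Rightarrow> ('v, 'k) hfun" where
  "rtrans \<omega> g f = (\<lambda>h. f (hmul \<omega> h g))"

type_synonym ('v, 'k) family = "('v, 'k) olag \<Rightarrow> ('v, 'k) olag \<Rightarrow> ('v, 'k) hfun \<Rightarrow> ('v, 'k) hfun"

definition intertwining_iso :: "('v::ab_group_add \<Rightarrow> 'v \<Rightarrow> 'k::field) \<Rightarrow> ('k \<Rightarrow> complex) \<Rightarrow> 'v set \<Rightarrow> 'v set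
     \<Rightarrow> (('v, 'k) hfun \<Rightarrow> ('v, 'k) hfun) \<Rightarrow> bool" where
  "intertwining_iso \<omega> \<psi> L M T \<longleftrightarrow>
     bij_betw T (Hsp \<omega> \<psi> L) (Hsp \<omega> \<psi> M) \<and>
     (\<forall>f\<in>Hsp \<omega> \<psi> L. \<forall>g\<in>Hsp \<omega> \<psi> L. T (\<lambda>h. f h + g h) = (\<lambda>h. T f h + T g h)) \<and>
     (\<forall>f\<in>Hsp \<omega> \<psi> L. \<forall>c. T (\<lambda>h. c * f h) = (\<lambda>h. c * T f h)) \<and>
     (\<forall>f\<in>Hsp \<omega> \<psi> L. \<forall>g. T (rtrans \<omega> g f) = rtrans \<omega> g (T f))"

definition T0 :: "('k::{field,finite} \<Rightarrow> 'v::ab_group_add \<Rightarrow> 'v) \<Rightarrow> ('v \<Rightarrow> 'v \<Rightarrow> 'k) \<Rightarrow> ('k \<Rightarrow> complex)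
     \<Rightarrow> ('v, 'k) olag \<Rightarrow> ('v, 'k) olag \<Rightarrow> ('v, 'k) hfun \<Rightarrow> ('v, 'k) hfun" where
  "T0 scale \<omega> \<psi> Mo Lo f = (\<lambda>h.
     (gauss1 \<psi> / of_nat (card (UNIV :: 'k set))) ^ half_dim scale *
     legendre_char ((-1) ^ (half_dim scale * (half_dim scale - 1) div 2) * omega_wedge scale \<omega> Lo Mo) *
     (\<Sum>m\<in>fst Mo. f (hmul \<omega> (m, 0) h)))"

definition sum_is_all :: "'v::ab_group_add set \<Rightarrow> 'v set \<Rightarrow> bool" where
  "sum_is_all M L \<longleftrightarrow> {m + l | m l. m \<in> M \<and> l \<in> L} = UNIV"

definition trivialization_props :: "('k::{field,finite} \<Rightarrow> 'v::ab_group_add \<Rightarrow> 'v) \<Rightarrow> ('v \<Rightarrow> 'v \<Rightarrow> 'k) \<Rightarrow> ('k \<Rightarrow> complex)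
     \<Rightarrow> ('v, 'k) family \<Rightarrow> bool" where
  "trivialization_props scale \<omega> \<psi> T \<longleftrightarrow>
     (\<forall>Mo\<in>OLag scale \<omega>. \<forall>Lo\<in>OLag scale \<omega>. intertwining_iso \<omega> \<psi> (fst Lo) (fst Mo) (T Mo Lo)) \<and>
     (\<forall>No\<in>OLag scale \<omega>. \<forall>Mo\<in>OLag scale \<omega>. \<forall>Lo\<in>OLag scale \<omega>. \<forall>f\<in>Hsp \<omega> \<psi> (fst Lo).
         T No Mo (T Mo Lo f) = T No Lo f) \<and>
     (\<forall>Mo\<in>OLag scale \<omega>. \<forall>Lo\<in>OLag scale \<omega>. sum_is_all (fst Mo) (fst Lo) \<longrightarrow>
         (\<forall>f\<in>Hsp \<omega> \<psi> (fst Lo). T Mo Lo f = T0 scale \<omega> \<psi> Mo Lo f))"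

definition canonical_trivialization :: "('k::{field,finite} \<Rightarrow> 'v::ab_group_add \<Rightarrow> 'v) \<Rightarrow> ('v \<Rightarrow> 'v \<Rightarrow> 'k) \<Rightarrow> ('k \<Rightarrow> complex)
     \<Rightarrow> ('v, 'k) family \<Rightarrow> bool" where
  "canonical_trivialization scale \<omega> \<psi> T \<longleftrightarrow>
     trivialization_props scale \<omega> \<psi> T \<and>
     (\<forall>T'. trivialization_props scale \<omega> \<psi> T' \<longrightarrow>
        (\<forall>Mo\<in>OLag scale \<omega>. \<forall>Lo\<in>OLag scale \<omega>. \<forall>f\<in>Hsp \<omega> \<psi> (fst Lo). T' Mo Lo f = T Mo Lo f))"

definition rstar :: "('v, 'k::field) hfun \<Rightarrow> ('v, 'k) hfun" where
  "rstar f = (\<lambda>(v, z). f (v, - z))"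

end

theory Submission
  imports Defs "Jordan_Normal_Form.Determinant"
begin

text \<open>
  Write V-bar for V with the negated form and r(v,z) = (v,-z).  Pulling back along r identifies
  H_L(V-bar, psi) with H_L(V, psi^-1) for every Lagrangian L and turns right translation by g
  into right translation by r(g).  Hence the conjugate r^* o T-bar o r^* of the canonical
  trivialization of (V-bar, psi) is a transitive family of intertwining isomorphisms for
  (V, psi^-1); by uniqueness it equals T as soon as it agrees with T^0 on transversal pairs.
  That comparison is a computation with the constant of T^0: negating the form multiplies
  omega_wedge by (-1)^n (every entry of the n x n Gram matrix changes sign, and n = dim V / 2
  since transversal Lagrangians have equal dimension), while inverting psi multiplies the Gauss
  sum G_1 by sigma(-1); as sigma is multiplicative the two factors sigma(-1)^n cancel.
\<close>

lemma symplectic_formD: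
  assumes "symplectic_form scale \<omega>"
  shows "\<omega> (x + y) z = \<omega> x z + \<omega> y z" "\<omega> x (y + z) = \<omega> x y + \<omega> x z"
    "\<omega> (scale c x) y = c * \<omega> x y" "\<omega> x (scale c y) = c * \<omega> x y"
    "\<omega> 0 x = 0" "\<omega> x 0 = 0"
proof -
  have addl: "\<omega> (x + y) z = \<omega> x z + \<omega> y z"
    and addr: "\<omega> x (y + z) = \<omega> x y + \<omega> x z" for x y z
    using assms unfolding symplectic_form_def by blast+
  show "\<omega> (x + y) z = \<omega> x z + \<omega> y z" "\<omega> x (y + z) = \<omega> x y + \<omega> x z"
    by (rule addl, rule addr)
  show "\<omega> (scale c x) y = c * \<omega> x y" "\<omega> x (scale c y) = c * \<omega> x y"
    using assms unfolding symplectic_form_def by blast+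
  show "\<omega> 0 x = 0" using addl[of 0 0 x] by (metis add.right_neutral add_left_cancel)
  show "\<omega> x 0 = 0" using addr[of x 0 0] by (metis add.right_neutral add_left_cancel)
qed

lemma symplectic_form_neg:
  assumes "symplectic_form scale \<omega>"
  shows "symplectic_form scale (\<lambda>u v. - \<omega> u v)"
  using assms unfolding symplectic_form_def by (auto simp: algebra_simps)

lemma OLag_neg:
  assumes "\<And>u v. \<omega>' u v = - \<omega> u v"
  shows "OLag scale \<omega>' = OLag scale \<omega>"
  by (simp add: OLag_def lagrangian_def assms)

lemma rstar_apply [simp]: "rstar f (v, z) = f (v, - z)"
  by (simp add: rstar_def)

lemma rstar_rstar [simp]: "rstar (rstar f) = f"
  by (rule ext) (auto simp: rstar_def)

lemma rstar_add: "rstar (\<lambda>h. f h + g h) = (\<lambda>h. rstar f h + rstar g h)"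
  by (rule ext) (auto simp: rstar_def)

lemma rstar_scale: "rstar (\<lambda>h. c * f h) = (\<lambda>h. c * rstar f h)"
  by (rule ext) (auto simp: rstar_def)

lemma rstar_rtrans:
  assumes "\<And>u v. \<omega>' u v = - \<omega> u v"
  shows "rstar (rtrans \<omega> g f) = rtrans \<omega>' (fst g, - snd g) (rstar f)"
  by (rule ext) (auto simp: rtrans_def rstar_def hmul_def assms algebra_simps)

text \<open>
  r^* maps H_L(V, psi) into H_L(V-bar, psi o uminus).  It is stated for any form omega' = -omega,
  so that it applies in both directions between V and V-bar.
\<close>

lemma rstar_Hsp:
  assumes \<omega>0: "\<And>x. \<omega> 0 x = 0" and neg: "\<And>u v. \<omega>' u v = - \<omega> u v"
    and \<psi>: "\<And>z. \<psi>' z = \<psi> (- z)" and f: "f \<in> Hsp \<omega> \<psi> L"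
  shows "rstar f \<in> Hsp \<omega>' \<psi>' L"
  unfolding Hsp_def
proof (intro CollectI allI impI)
  fix z l and h :: "'a \<times> 'b" assume l: "l \<in> L"
  obtain v t where h: "h = (v, t)" by (cases h)
  have "rstar f (hmul \<omega>' (0, z) (hmul \<omega>' (l, 0) h))
      = f (hmul \<omega> (0, - z) (hmul \<omega> (l, 0) (v, - t)))"
    by (simp add: h hmul_def neg \<omega>0 algebra_simps)
  also have "\<dots> = \<psi> (- z) * f (v, - t)"
    using f l unfolding Hsp_def by blast
  finally show "rstar f (hmul \<omega>' (0, z) (hmul \<omega>' (l, 0) h)) = \<psi>' z * rstar f h"
    by (simp add: h \<psi>)
qed

text \<open>Being an involution, r^* is a bijection between these spaces.\<close>

lemma rstar_bij_Hsp:
  assumes \<omega>0: "\<And>x. \<omega> 0 x = 0" and neg: "\<And>u v. \<omega>' u v = - \<omega> u v"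
    and \<psi>: "\<And>z. \<psi>' z = \<psi> (- z)"
  shows "bij_betw rstar (Hsp \<omega> \<psi> L) (Hsp \<omega>' \<psi>' L)"
proof (rule bij_betw_byWitness[where f' = rstar])
  have inverse_dir: "rstar f \<in> Hsp \<omega> \<psi> L" if "f \<in> Hsp \<omega>' \<psi>' L" for f
    by (rule rstar_Hsp[OF _ _ _ that]) (simp_all add: \<omega>0 neg \<psi>)
  show "rstar ` Hsp \<omega> \<psi> L \<subseteq> Hsp \<omega>' \<psi>' L"
    using rstar_Hsp[of \<omega> \<omega>' \<psi>' \<psi>, OF \<omega>0 neg \<psi>] by blast
  show "rstar ` Hsp \<omega>' \<psi>' L \<subseteq> Hsp \<omega> \<psi> L" using inverse_dir by blast
qed simp_all

lemma intertwining_iso_rstar: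
  assumes \<omega>0: "\<And>x. \<omega> 0 x = 0" and neg: "\<And>u v. \<omega>' u v = - \<omega> u v"
    and \<psi>: "\<And>z. \<psi>' z = \<psi> (- z)" and S: "intertwining_iso \<omega>' \<psi>' L M S"
  shows "intertwining_iso \<omega> \<psi> L M (\<lambda>f. rstar (S (rstar f)))"
  unfolding intertwining_iso_def
proof (intro conjI ballI allI)
  have neg': "\<And>u v. \<omega> u v = - \<omega>' u v" by (simp add: neg)
  have \<omega>0': "\<And>x. \<omega>' 0 x = 0" by (simp add: neg \<omega>0)
  have \<psi>': "\<And>z. \<psi> z = \<psi>' (- z)" by (simp add: \<psi>)
  have to_bar: "bij_betw rstar (Hsp \<omega> \<psi> K) (Hsp \<omega>' \<psi>' K)" for K
    by (rule rstar_bij_Hsp) (simp_all add: \<omega>0 neg \<psi>)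
  have from_bar: "bij_betw rstar (Hsp \<omega>' \<psi>' K) (Hsp \<omega> \<psi> K)" for K
    by (rule rstar_bij_Hsp) (simp_all add: \<omega>0' neg' \<psi>')
  have SL: "bij_betw S (Hsp \<omega>' \<psi>' L) (Hsp \<omega>' \<psi>' M)"
    using S unfolding intertwining_iso_def by blast
  show "bij_betw (\<lambda>f. rstar (S (rstar f))) (Hsp \<omega> \<psi> L) (Hsp \<omega> \<psi> M)"
    using bij_betw_trans[OF bij_betw_trans[OF to_bar SL] from_bar] by (simp add: comp_def)
  fix f assume f: "f \<in> Hsp \<omega> \<psi> L"
  have rf: "rstar f \<in> Hsp \<omega>' \<psi>' L" by (rule rstar_Hsp[OF _ _ _ f]) (simp_all add: \<omega>0 neg \<psi>)
  show "rstar (S (rstar (\<lambda>h. f h + g h))) = (\<lambda>h. rstar (S (rstar f)) h + rstar (S (rstar g)) h)"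
    if "g \<in> Hsp \<omega> \<psi> L" for g
    using S rf rstar_Hsp[of \<omega> \<omega>' \<psi>' \<psi>, OF \<omega>0 neg \<psi> that]
    unfolding intertwining_iso_def by (simp add: rstar_add)
  show "rstar (S (rstar (\<lambda>h. c * f h))) = (\<lambda>h. c * rstar (S (rstar f)) h)" for c
    using S rf unfolding intertwining_iso_def by (simp add: rstar_scale)
  show "rstar (S (rstar (rtrans \<omega> g f))) = rtrans \<omega> g (rstar (S (rstar f)))" for g
    using S rf unfolding intertwining_iso_def
    by (simp add: rstar_rtrans[of \<omega>' \<omega>, OF neg] rstar_rtrans[of \<omega> \<omega>', OF neg'])
qed

lemma trivialization_props_rstar:
  assumes \<omega>0: "\<And>x. \<omega> 0 x = 0" and neg: "\<And>u v. \<omega>' u v = - \<omega> u v"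
    and \<psi>: "\<And>z. \<psi>' z = \<psi> (- z)" and Tbar: "trivialization_props scale \<omega>' \<psi>' Tbar"
    and T0: "\<And>Mo Lo f. Mo \<in> OLag scale \<omega> \<Longrightarrow> Lo \<in> OLag scale \<omega> \<Longrightarrow>
               sum_is_all (fst Mo) (fst Lo) \<Longrightarrow>
               rstar (T0 scale \<omega>' \<psi>' Mo Lo (rstar f)) = T0 scale \<omega> \<psi> Mo Lo f"
  shows "trivialization_props scale \<omega> \<psi> (\<lambda>Mo Lo f. rstar (Tbar Mo Lo (rstar f)))"
  using Tbar unfolding trivialization_props_def OLag_neg[OF neg]
  by (auto simp: intertwining_iso_rstar[of \<omega> \<omega>' \<psi>' \<psi>, OF \<omega>0 neg \<psi>]
      rstar_Hsp[of \<omega> \<omega>' \<psi>' \<psi>, OF \<omega>0 neg \<psi>] T0[symmetric])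

section \<open>The Legendre character of a finite field of odd characteristic\<close>

lemma card_square_fibre_le: "card {z::'k::field. z * z = y * y} \<le> 2"
proof -
  have "{z::'k. z * z = y * y} \<subseteq> {y, - y}" using square_eq_iff by auto
  then have "card {z::'k. z * z = y * y} \<le> card {y, - y}" by (intro card_mono) auto
  also have "\<dots> \<le> 2" by (simp add: card_insert_if)
  finally show ?thesis .
qed

lemma card_nonzero_le_twice_squares:
  "card (UNIV - {0::'k::{field,finite}}) \<le> 2 * card {x::'k. x \<noteq> 0 \<and> (\<exists>y. y * y = x)}"
  (is "_ \<le> 2 * card ?S")
proof -
  have "card (UNIV - {0::'k}) \<le> card (\<Union>s\<in>?S. {z. z * z = s})"
    by (intro card_mono) auto
  also have "\<dots> \<le> (\<Sum>s\<in>?S. card {z. z * z = s})" by (rule card_UN_le) simp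
  also have "\<dots> \<le> (\<Sum>s\<in>?S. 2)" by (intro sum_mono) (auto simp: card_square_fibre_le)
  finally show ?thesis by simp
qed

text \<open>
  Multiplication by a nonsquare maps the nonzero squares bijectively onto the nonsquares: it
  maps into them injectively, and by the count above there are at least as many squares as
  nonsquares.
\<close>

lemma nonsquare_times_squares:
  fixes u :: "'k::{field,finite}"
  assumes u: "\<not> (\<exists>y. y * y = u)"
  shows "(\<lambda>x. u * x) ` {x. x \<noteq> 0 \<and> (\<exists>y. y * y = x)} = {x. \<not> (\<exists>y. y * y = x)}"
    (is "?f ` ?S = ?N")
proof (rule card_subset_eq)
  show sub: "?f ` ?S \<subseteq> ?N"
  proof clarify
    fix y w assume y: "y * y \<noteq> 0" and w: "w * w = u * (y * y)"
    then have "(w / y) * (w / y) = u" by (simp add: field_simps)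
    then show False using u by blast
  qed
  have "u \<noteq> 0" using u by auto
  then have inj: "inj_on ?f ?S" by (simp add: inj_on_def)
  have "0 \<notin> ?N" by simp
  then have part: "?S \<union> ?N = UNIV - {0}" and disj: "?S \<inter> ?N = {}" by blast+
  have "card ?S + card ?N = card (?S \<union> ?N)"
    by (rule card_Un_disjoint[symmetric]) (rule finite, rule finite, rule disj)
  then have "card ?S + card ?N = card (UNIV - {0::'k})" by (simp only: part)
  then have "card ?N \<le> card ?S" using card_nonzero_le_twice_squares[where 'k='k] by linarith
  then show "card (?f ` ?S) = card ?N"
    using card_mono[OF _ sub] card_image[OF inj] by simp
qed (rule finite)

lemma nonsquare_mult:
  fixes u v :: "'k::{field,finite}"
  assumes u: "\<not> (\<exists>y. y * y = u)" and v: "\<not> (\<exists>y. y * y = v)"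
  shows "\<exists>y. y * y = u * v"
proof -
  obtain y where "v = u * (y * y)"
    using v nonsquare_times_squares[OF u] by (blast elim: equalityE)
  then have "(u * y) * (u * y) = u * v" by (simp add: algebra_simps)
  then show ?thesis by blast
qed

lemma square_times_iff:
  fixes a y :: "'k::field"
  assumes "a \<noteq> 0"
  shows "(\<exists>w. w * w = a * a * y) \<longleftrightarrow> (\<exists>w. w * w = y)"
proof
  assume "\<exists>w. w * w = a * a * y"
  then obtain w where "w * w = a * a * y" by blast
  then have "(w / a) * (w / a) = y" using assms by (simp add: field_simps)
  then show "\<exists>w. w * w = y" by blast
next
  assume "\<exists>w. w * w = y"
  then obtain w where "w * w = y" by blast
  then have "(a * w) * (a * w) = a * a * y" by (simp add: ac_simps)
  then show "\<exists>w. w * w = a * a * y" by blast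
qed

lemma legendre_mult:
  fixes x y :: "'k::{field,finite}"
  shows "legendre_char (x * y) = legendre_char x * legendre_char y"
proof (cases "x = 0 \<or> y = 0")
  case True
  then show ?thesis by (auto simp: legendre_char_def)
next
  case False
  then have nz: "x \<noteq> 0" "y \<noteq> 0" "x * y \<noteq> 0" by auto
  consider (sq_x) a where "a * a = x" | (sq_y) b where "b * b = y"
    | (neither) "\<not> (\<exists>a. a * a = x)" "\<not> (\<exists>b. b * b = y)"
    by blast
  then show ?thesis
  proof cases
    case sq_x
    then have "a \<noteq> 0" using nz by auto
    then have "(\<exists>w. w * w = x * y) \<longleftrightarrow> (\<exists>w. w * w = y)"
      using square_times_iff[of a y] sq_x by simp
    then show ?thesis using nz sq_x by (auto simp: legendre_char_def)
  next
    case sq_y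
    then have "b \<noteq> 0" using nz by auto
    then have "(\<exists>w. w * w = x * y) \<longleftrightarrow> (\<exists>w. w * w = x)"
      using square_times_iff[of b x] sq_y by (simp add: ac_simps)
    then show ?thesis using nz sq_y by (auto simp: legendre_char_def)
  next
    case neither
    then show ?thesis using nz nonsquare_mult[OF neither] by (simp add: legendre_char_def)
  qed
qed

text \<open>Since sigma(c)^2 = 1 for c nonzero, sigma(1/c) = sigma(c).\<close>

lemma legendre_inverse:
  fixes c :: "'k::{field,finite}"
  shows "legendre_char (inverse c) = legendre_char c"
proof (cases "c = 0")
  case False
  then have "inverse c = c * (inverse c * inverse c)" by (simp add: field_simps)
  then have "legendre_char (inverse c) = legendre_char c * (legendre_char (inverse c))\<^sup>2"
    by (metis legendre_mult power2_eq_square)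
  moreover have "(legendre_char (inverse c))\<^sup>2 = 1"
    using False by (simp add: legendre_char_def)
  ultimately show ?thesis by simp
qed simp

lemma card_square_roots:
  fixes x :: "'k::{field,finite}"
  assumes two: "(2::'k) \<noteq> 0"
  shows "of_nat (card {z. z * z = x}) = 1 + legendre_char x"
proof (cases "\<exists>y. y * y = x")
  case True
  then obtain y where y: "y * y = x" by blast
  have roots: "{z. z * z = x} = {y, - y}" using y square_eq_iff by auto
  show ?thesis
  proof (cases "y = 0")
    case True
    then show ?thesis using y roots by (simp add: legendre_char_def)
  next
    case False
    have "y \<noteq> - y"
    proof
      assume yy: "y = - y"
      have "y + y = 0" by (subst (2) yy) simp
      then have "2 * y = 0" by (simp only: mult_2)
      then show False using two False by simp
    qed
    moreover have "x \<noteq> 0" using y False by auto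
    ultimately show ?thesis using True roots by (simp add: legendre_char_def)
  qed
next
  case False
  then have "{z. z * z = x} = {}" "x \<noteq> 0" by auto
  then show ?thesis using False by (simp add: legendre_char_def)
qed

lemma sum_over_squares:
  fixes F :: "'k::{field,finite} \<Rightarrow> complex"
  assumes two: "(2::'k) \<noteq> 0"
  shows "(\<Sum>z\<in>UNIV. F (z * z)) = (\<Sum>x\<in>UNIV. (1 + legendre_char x) * F x)"
proof -
  have "(\<Sum>z\<in>UNIV. F (z * z)) = (\<Sum>z\<in>UNIV. \<Sum>x\<in>UNIV. if z * z = x then F x else 0)"
    by simp
  also have "\<dots> = (\<Sum>x\<in>UNIV. \<Sum>z\<in>UNIV. if z * z = x then F x else 0)"
    by (rule sum.swap)
  also have "\<dots> = (\<Sum>x\<in>UNIV. of_nat (card {z. z * z = x}) * F x)"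
  proof (rule sum.cong[OF refl])
    fix x
    have "(\<Sum>z\<in>UNIV. if z * z = x then F x else 0) = (\<Sum>z\<in>{z. z * z = x}. F x)"
      by (simp add: sum.If_cases Int_def)
    then show "(\<Sum>z\<in>UNIV. if z * z = x then F x else 0) = of_nat (card {z. z * z = x}) * F x"
      by simp
  qed
  also have "\<dots> = (\<Sum>x\<in>UNIV. (1 + legendre_char x) * F x)"
    by (simp add: card_square_roots[OF two])
  finally show ?thesis .
qed

section \<open>Additive characters and quadratic Gauss sums\<close>

lemma char_zero_eq_one:
  assumes "nontrivial_char \<psi>"
  shows "\<psi> 0 = 1"
proof -
  have "\<psi> (0 + 0) = \<psi> 0 * \<psi> 0" "\<psi> 0 \<noteq> 0" using assms unfolding nontrivial_char_def by blast+
  then show ?thesis by simp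
qed

lemma char_inverse:
  assumes "nontrivial_char \<psi>"
  shows "inverse (\<psi> z) = \<psi> (- z)"
proof -
  have "\<psi> (z + - z) = \<psi> z * \<psi> (- z)" using assms unfolding nontrivial_char_def by blast
  then have "\<psi> z * \<psi> (- z) = 1" using char_zero_eq_one[OF assms] by simp
  then show ?thesis by (rule inverse_unique)
qed

lemma char_scaled_sum_zero:
  fixes \<psi> :: "'k::{field,finite} \<Rightarrow> complex"
  assumes \<psi>: "nontrivial_char \<psi>" and c: "c \<noteq> 0"
  shows "(\<Sum>x\<in>UNIV. \<psi> (c * x)) = 0"
proof -
  obtain a where a: "\<psi> a \<noteq> 1" using \<psi> unfolding nontrivial_char_def by blast
  have "(\<Sum>x\<in>UNIV. \<psi> (c * x)) = (\<Sum>x\<in>UNIV. \<psi> (c * (a / c + x)))"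
    by (rule sum.reindex_bij_witness[of _ "\<lambda>x. a / c + x" "\<lambda>x. x - a / c"]) auto
  also have "\<dots> = (\<Sum>x\<in>UNIV. \<psi> a * \<psi> (c * x))"
    using \<psi> c unfolding nontrivial_char_def by (simp add: distrib_left)
  also have "\<dots> = \<psi> a * (\<Sum>x\<in>UNIV. \<psi> (c * x))"
    by (simp add: sum_distrib_left)
  finally have "(\<Sum>x\<in>UNIV. \<psi> (c * x)) = \<psi> a * (\<Sum>x\<in>UNIV. \<psi> (c * x))" .
  then show ?thesis using a by (metis mult_cancel_right1)
qed

lemma quadratic_sum_weighted:
  fixes \<psi> :: "'k::{field,finite} \<Rightarrow> complex"
  assumes two: "(2::'k) \<noteq> 0" and \<psi>: "nontrivial_char \<psi>" and c: "c \<noteq> 0"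
  shows "(\<Sum>z\<in>UNIV. \<psi> (c * (z * z))) = (\<Sum>x\<in>UNIV. legendre_char x * \<psi> (c * x))"
  using sum_over_squares[OF two, of "\<lambda>x. \<psi> (c * x)"] char_scaled_sum_zero[OF \<psi> c]
  by (simp add: distrib_right sum.distrib)

lemma quadratic_sum_scale:
  fixes \<psi> :: "'k::{field,finite} \<Rightarrow> complex"
  assumes two: "(2::'k) \<noteq> 0" and \<psi>: "nontrivial_char \<psi>" and c: "c \<noteq> 0"
  shows "(\<Sum>z\<in>UNIV. \<psi> (c * (z * z))) = legendre_char c * (\<Sum>z\<in>UNIV. \<psi> (z * z))"
proof -
  have "(\<Sum>x\<in>UNIV. legendre_char x * \<psi> (c * x))
      = (\<Sum>y\<in>UNIV. legendre_char (inverse c * y) * \<psi> y)"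
    by (rule sum.reindex_bij_witness[of _ "\<lambda>y. inverse c * y" "\<lambda>x. c * x"])
      (use c in \<open>auto simp: mult.assoc[symmetric]\<close>)
  also have "\<dots> = legendre_char c * (\<Sum>y\<in>UNIV. legendre_char y * \<psi> y)"
    by (simp add: legendre_mult legendre_inverse sum_distrib_left ac_simps)
  finally show ?thesis
    using quadratic_sum_weighted[OF two \<psi> c] quadratic_sum_weighted[OF two \<psi>, of 1] by simp
qed

lemma gauss1_inverse_char:
  fixes \<psi> :: "'k::{field,finite} \<Rightarrow> complex"
  assumes two: "(2::'k) \<noteq> 0" and \<psi>: "nontrivial_char \<psi>"
  shows "gauss1 (\<lambda>z. inverse (\<psi> z)) = legendre_char (-1::'k) * gauss1 \<psi>"
proof -
  let ?Q = "\<Sum>z\<in>UNIV. \<psi> (z * z)"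
  have "gauss1 \<psi> = (\<Sum>z\<in>UNIV. \<psi> ((1 / 2) * (z * z)))" by (simp add: gauss1_def)
  also have "\<dots> = legendre_char (1 / 2 :: 'k) * ?Q"
    by (rule quadratic_sum_scale[OF two \<psi>]) (use two in simp)
  finally have G: "gauss1 \<psi> = legendre_char (1 / 2 :: 'k) * ?Q" .
  have "gauss1 (\<lambda>z. inverse (\<psi> z)) = (\<Sum>z\<in>UNIV. \<psi> ((-1) * (1 / 2) * (z * z)))"
    by (simp add: gauss1_def char_inverse[OF \<psi>])
  also have "\<dots> = legendre_char ((-1) * (1 / 2) :: 'k) * ?Q"
    by (rule quadratic_sum_scale[OF two \<psi>]) (use two in simp)
  finally show ?thesis unfolding G legendre_mult by simp
qed

section \<open>Gram determinants\<close>

definition gram_matrix :: "('v \<Rightarrow> 'v \<Rightarrow> 'k::comm_ring_1) \<Rightarrow> nat \<Rightarrow> 'v list \<Rightarrow> 'v list \<Rightarrow> 'k mat" where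
  "gram_matrix \<omega> n a b = mat n n (\<lambda>(i, j). \<omega> (a ! i) (b ! j))"

lemma permutes_lessThan: "p permutes {..<n} \<Longrightarrow> i < n \<Longrightarrow> p i < n"
  by (meson lessThan_iff permutes_in_image)

lemma gram_det_is_det: "gram_det \<omega> n a b = det (gram_matrix \<omega> n a b)"
proof -
  have "det (gram_matrix \<omega> n a b)
      = (\<Sum>p\<in>{p. p permutes {0..<n}}. signof p * (\<Prod>i=0..<n. gram_matrix \<omega> n a b $$ (i, p i)))"
    by (rule det_def') (simp add: gram_matrix_def)
  also have "\<dots> = gram_det \<omega> n a b"
    unfolding gram_det_def atLeast0LessThan
    by (rule sum.cong) (auto intro!: prod.cong simp: gram_matrix_def permutes_lessThan)
  finally show ?thesis by simp
qed

lemma gram_det_transpose: "gram_det \<omega> n a b = gram_det (\<lambda>u v. \<omega> v u) n b a"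
proof -
  have "transpose_mat (gram_matrix (\<lambda>u v. \<omega> v u) n b a) = gram_matrix \<omega> n a b"
    by (rule eq_matI) (auto simp: gram_matrix_def)
  then show ?thesis unfolding gram_det_is_det
    by (metis det_transpose gram_matrix_def mat_carrier)
qed

lemma gram_det_neg: "gram_det (\<lambda>u v. - \<omega> u v) n a b = (-1) ^ n * gram_det \<omega> n a b"
  unfolding gram_det_def by (simp add: prod_uminus sum_distrib_left algebra_simps)

lemma gram_det_equal_rows:
  assumes "i < j" "j < n" "a ! i = a ! j"
  shows "gram_det \<omega> n a b = 0"
  unfolding gram_det_is_det
proof (rule det_identical_rows[of _ n i j])
  show "row (gram_matrix \<omega> n a b) i = row (gram_matrix \<omega> n a b) j"
    using assms by (auto simp: gram_matrix_def row_def)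
qed (use assms in \<open>auto simp: gram_matrix_def\<close>)

lemma gram_product_update:
  assumes i: "i < n" and len: "length a = n"
  shows "(\<Prod>j<n. \<omega> (a[i := y] ! j) (b ! p j))
       = \<omega> y (b ! p i) * (\<Prod>j\<in>{..<n} - {i}. \<omega> (a ! j) (b ! p j))"
proof -
  have "(\<Prod>j<n. \<omega> (a[i := y] ! j) (b ! p j))
      = \<omega> (a[i := y] ! i) (b ! p i) * (\<Prod>j\<in>{..<n} - {i}. \<omega> (a[i := y] ! j) (b ! p j))"
    using i by (subst prod.remove[of "{..<n}" i]) auto
  also have "\<dots> = \<omega> y (b ! p i) * (\<Prod>j\<in>{..<n} - {i}. \<omega> (a ! j) (b ! p j))"
    using i len by (auto intro!: prod.cong)
  finally show ?thesis .
qed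

text \<open>
  It can therefore be evaluated against the wedge representation of
  an orientation.
\<close>

lemma gram_det_alternating_rows:
  assumes add: "\<And>x y z. \<omega> (x + y) z = \<omega> x z + \<omega> y z"
    and sc: "\<And>c x y. \<omega> (scale c x) y = c * \<omega> x y"
  shows "alt_multilinear scale L n (\<lambda>a. gram_det \<omega> n a b)"
  unfolding alt_multilinear_def
proof (intro conjI allI impI)
  fix a i u w assume h: "length a = n \<and> set a \<subseteq> L \<and> i < n \<and> u \<in> L \<and> w \<in> L"
  then show "gram_det \<omega> n (a[i := u + w]) b = gram_det \<omega> n (a[i := u]) b + gram_det \<omega> n (a[i := w]) b"
    unfolding gram_det_def
    by (simp only: gram_product_update add) (simp add: algebra_simps sum.distrib)
next
  fix a i u c assume h: "length a = n \<and> set a \<subseteq> L \<and> i < n \<and> u \<in> L"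
  then show "gram_det \<omega> n (a[i := scale c u]) b = c * gram_det \<omega> n (a[i := u]) b"
    unfolding gram_det_def
    by (simp only: gram_product_update sc) (simp add: algebra_simps sum_distrib_left)
next
  fix a i j assume "length a = n \<and> set a \<subseteq> L \<and> i < j \<and> j < n \<and> a ! i = a ! j"
  then show "gram_det \<omega> n a b = 0" by (intro gram_det_equal_rows[of i j]) auto
qed

lemma gram_det_alternating_cols:
  assumes add: "\<And>x y z. \<omega> x (y + z) = \<omega> x y + \<omega> x z"
    and sc: "\<And>c x y. \<omega> x (scale c y) = c * \<omega> x y"
  shows "alt_multilinear scale L n (\<lambda>b. gram_det \<omega> n a b)"
  unfolding gram_det_transpose[of \<omega> n a]
  by (rule gram_det_alternating_rows) (simp_all add: add sc)

section \<open>Transversal Lagrangians\<close>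

lemma finite_dimensional_vector_space_exists:
  fixes scale :: "'k::field \<Rightarrow> 'v::{ab_group_add,finite} \<Rightarrow> 'v"
  assumes "vector_space scale"
  obtains B where "finite_dimensional_vector_space scale B"
proof -
  interpret vector_space scale by fact
  obtain B where "independent B" "UNIV \<subseteq> span B" using basis_exists by blast
  then have "finite_dimensional_vector_space scale B" by unfold_locales auto
  then show ?thesis using that by blast
qed

lemma basis_list_length:
  assumes "vector_space scale" "basis_list scale L a"
  shows "length a = vector_space.dim scale L"
proof -
  interpret vector_space scale by fact
  have "distinct a" "independent (set a)" "span (set a) = L"
    using assms(2) unfolding basis_list_def by auto
  then show ?thesis by (metis dim_span_eq_card_independent distinct_card)
qed

text \<open>Lagrangians with M + L = V meet only in 0, by nondegeneracy.\<close>

lemma general_position_inter: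
  assumes sf: "symplectic_form scale \<omega>" and M: "lagrangian scale \<omega> M" and L: "lagrangian scale \<omega> L"
    and s: "sum_is_all M L" and v: "v \<in> M" "v \<in> L"
  shows "v = 0"
proof -
  have "\<omega> v y = 0" for y
  proof -
    have "y \<in> {m + l | m l. m \<in> M \<and> l \<in> L}" using s unfolding sum_is_all_def by simp
    then obtain m l where y: "y = m + l" "m \<in> M" "l \<in> L" by blast
    have "\<omega> v m = 0" "\<omega> v l = 0"
      using M L v y unfolding lagrangian_def by blast+
    then show ?thesis using y symplectic_formD(2)[OF sf] by simp
  qed
  then show ?thesis using sf unfolding symplectic_form_def by blast
qed

lemma pairing_vanishes_on_span:
  assumes vs: "vector_space scale" and sf: "symplectic_form scale \<omega>"
    and fin: "finite Bb" and ind: "\<not> module.dependent scale Bb"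
    and zero: "(\<Sum>x\<in>Bb. scale (\<omega> d x) x) = 0"
  shows "\<forall>w \<in> module.span scale Bb. \<omega> d w = 0"
proof -
  interpret vector_space scale by fact
  have "\<omega> d x = 0" if "x \<in> Bb" for x
    using independentD[OF ind fin subset_refl zero] that .
  moreover have "subspace {w. \<omega> d w = 0}"
    unfolding subspace_def by (simp add: symplectic_formD[OF sf])
  ultimately have "span Bb \<subseteq> {w. \<omega> d w = 0}" by (intro span_minimal) auto
  then show ?thesis by blast
qed

text \<open>
  A subspace A meeting a Lagrangian B only in 0 has dim A <= dim B: the map m |-> sum over a basis
  x of B of omega(m,x) x is linear from A into B, and injective because its kernel lies in the
  orthogonal complement of B, which is B.
\<close>

lemma dim_le_lagrangian:
  fixes scale :: "'k::field \<Rightarrow> 'v::{ab_group_add,finite} \<Rightarrow> 'v"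
  assumes vs: "vector_space scale" and sf: "symplectic_form scale \<omega>"
    and A: "module.subspace scale A" and B: "lagrangian scale \<omega> B"
    and AB: "\<And>v. v \<in> A \<Longrightarrow> v \<in> B \<Longrightarrow> v = 0"
  shows "vector_space.dim scale A \<le> vector_space.dim scale B"
proof -
  interpret vector_space scale by fact
  obtain B0 where "finite_dimensional_vector_space scale B0"
    using finite_dimensional_vector_space_exists[OF vs] by blast
  then interpret fdp: finite_dimensional_vector_space_pair_1 scale B0 scale
    using vs by (simp add: finite_dimensional_vector_space_pair_1_def)
  obtain Bb where Bb: "Bb \<subseteq> B" "independent Bb" "B \<subseteq> span Bb" "card Bb = dim B"
    using basis_exists by blast
  define \<phi> where "\<phi> m = (\<Sum>x\<in>Bb. scale (\<omega> m x) x)" for m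
  have \<phi>_add: "\<phi> (x + y) = \<phi> x + \<phi> y" for x y
    unfolding \<phi>_def by (simp add: symplectic_formD[OF sf] scale_left_distrib sum.distrib)
  have \<phi>_diff: "\<phi> (x - y) = \<phi> x - \<phi> y" for x y
    using \<phi>_add[of "x - y" y] by simp
  have lin: "Vector_Spaces.linear scale scale \<phi>"
    unfolding Vector_Spaces.linear_iff using vs \<phi>_add
    by (simp add: \<phi>_def symplectic_formD[OF sf] scale_sum_right)
  have inj: "inj_on \<phi> (span A)"
  proof (rule inj_onI)
    fix x y assume x: "x \<in> span A" and y: "y \<in> span A" and e: "\<phi> x = \<phi> y"
    have spanA: "span A = A" using A by (rule span_eq_iff[THEN iffD2])
    have dA: "x - y \<in> A" using subspace_diff[OF A] x y unfolding spanA by blast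
    have "\<forall>w \<in> span Bb. \<omega> (x - y) w = 0"
      by (rule pairing_vanishes_on_span[OF vs sf]) (use e Bb(2) \<phi>_diff in \<open>auto simp: \<phi>_def\<close>)
    then have "x - y \<in> B" using B Bb(3) unfolding lagrangian_def by blast
    then have "x - y = 0" by (rule AB[OF dA])
    then show "x = y" by simp
  qed
  have "\<phi> ` A \<subseteq> span Bb"
    unfolding \<phi>_def by (blast intro: span_sum span_scale span_base)
  then have "dim (\<phi> ` A) \<le> dim Bb" by (rule fdp.vs1.dim_mono)
  moreover have "dim A = dim (\<phi> ` A)" using fdp.dim_image_eq[OF lin inj] by simp
  moreover have "dim Bb = dim B" using Bb dim_eq_card_independent by simp
  ultimately show ?thesis by simp
qed

lemma general_position_dims:
  fixes scale :: "'k::field \<Rightarrow> 'v::{ab_group_add,finite} \<Rightarrow> 'v"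
  assumes vs: "vector_space scale" and sf: "symplectic_form scale \<omega>"
    and M: "lagrangian scale \<omega> M" and L: "lagrangian scale \<omega> L" and s: "sum_is_all M L"
  shows "vector_space.dim scale M = vector_space.dim scale L"
    and "vector_space.dim scale (UNIV :: 'v set) = 2 * vector_space.dim scale L"
proof -
  interpret vector_space scale by fact
  obtain B0 where "finite_dimensional_vector_space scale B0"
    using finite_dimensional_vector_space_exists[OF vs] by blast
  then interpret fd: finite_dimensional_vector_space scale B0 .
  have sM: "subspace M" and sL: "subspace L" using M L unfolding lagrangian_def by auto
  have inter: "v = 0" if "v \<in> M" "v \<in> L" for v
    using general_position_inter[OF sf M L s that] .
  show e: "dim M = dim L"
    using dim_le_lagrangian[OF vs sf sM L] dim_le_lagrangian[OF vs sf sL M] inter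
    by (meson le_antisym)
  have "M \<inter> L = {0}" using inter subspace_0[OF sM] subspace_0[OF sL] by blast
  moreover have "{x + y |x y. x \<in> M \<and> y \<in> L} = UNIV" using s unfolding sum_is_all_def by simp
  ultimately have "dim (UNIV :: 'v set) = dim M + dim L"
    using fd.dim_sums_Int[OF sM sL] by simp
  then show "dim (UNIV :: 'v set) = 2 * dim L" using e by simp
qed

lemma general_position_basis_length:
  fixes scale :: "'k::field \<Rightarrow> 'v::{ab_group_add,finite} \<Rightarrow> 'v"
  assumes vs: "vector_space scale" and sf: "symplectic_form scale \<omega>"
    and M: "lagrangian scale \<omega> M" and L: "lagrangian scale \<omega> L" and s: "sum_is_all M L"
    and a: "basis_list scale M a \<or> basis_list scale L a"
  shows "length a = half_dim scale"
  using a basis_list_length[OF vs] general_position_dims[OF vs sf M L s]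
  unfolding half_dim_def by auto

section \<open>The pairing omega_wedge of orientations\<close>

definition omega_wedge_rep ::
    "('k::field \<Rightarrow> 'v::ab_group_add \<Rightarrow> 'v) \<Rightarrow> ('v \<Rightarrow> 'v \<Rightarrow> 'k) \<Rightarrow> ('v, 'k) olag \<Rightarrow> ('v, 'k) olag \<Rightarrow> 'k \<Rightarrow> bool" where
  "omega_wedge_rep scale \<omega> A B x \<longleftrightarrow> (\<exists>c a d b.
      snd A = (\<lambda>\<phi>. c * wedge scale (fst A) a \<phi>) \<and> basis_list scale (fst A) a \<and>
      snd B = (\<lambda>\<phi>. d * wedge scale (fst B) b \<phi>) \<and> basis_list scale (fst B) b \<and>
      x = c * d * (-1) ^ (length a * (length a - 1) div 2) * gram_det \<omega> (length a) a b)"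

text \<open>
  Well-definedness: the value does not depend on the chosen representations.  Two representations
  of one orientation agree on the alternating form given by the Gram determinant.
\<close>

lemma omega_wedge_rep_unique:
  assumes sf: "symplectic_form scale \<omega>"
    and lenA: "\<And>a. basis_list scale (fst A) a \<Longrightarrow> length a = n"
    and lenB: "\<And>b. basis_list scale (fst B) b \<Longrightarrow> length b = n"
    and x: "omega_wedge_rep scale \<omega> A B x" and y: "omega_wedge_rep scale \<omega> A B y"
  shows "x = y"
proof -
  obtain c a d b where 1: "snd A = (\<lambda>\<phi>. c * wedge scale (fst A) a \<phi>)" "basis_list scale (fst A) a"
      "snd B = (\<lambda>\<phi>. d * wedge scale (fst B) b \<phi>)" "basis_list scale (fst B) b"
      "x = c * d * (-1) ^ (length a * (length a - 1) div 2) * gram_det \<omega> (length a) a b"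
    using x unfolding omega_wedge_rep_def by blast
  obtain c' a' d' b' where 2: "snd A = (\<lambda>\<phi>. c' * wedge scale (fst A) a' \<phi>)" "basis_list scale (fst A) a'"
      "snd B = (\<lambda>\<phi>. d' * wedge scale (fst B) b' \<phi>)" "basis_list scale (fst B) b'"
      "y = c' * d' * (-1) ^ (length a' * (length a' - 1) div 2) * gram_det \<omega> (length a') a' b'"
    using y unfolding omega_wedge_rep_def by blast
  have len: "length a = n" "length a' = n" "length b = n" "length b' = n"
    using lenA lenB 1 2 by auto
  have rows: "alt_multilinear scale (fst A) n (\<lambda>a. gram_det \<omega> n a b)"
    by (rule gram_det_alternating_rows) (simp_all add: symplectic_formD[OF sf])
  have cols: "alt_multilinear scale (fst B) n (\<lambda>b. gram_det \<omega> n a' b)"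
    by (rule gram_det_alternating_cols) (simp_all add: symplectic_formD[OF sf])
  have eA: "c * gram_det \<omega> n a b = c' * gram_det \<omega> n a' b"
    using fun_cong[OF trans[OF 1(1)[symmetric] 2(1)], of "\<lambda>a. gram_det \<omega> n a b"] rows len
    unfolding wedge_def by simp
  have eB: "d * gram_det \<omega> n a' b = d' * gram_det \<omega> n a' b'"
    using fun_cong[OF trans[OF 1(3)[symmetric] 2(3)], of "\<lambda>b. gram_det \<omega> n a' b"] cols len
    unfolding wedge_def by simp
  define s :: 'a where "s = (-1) ^ (n * (n - 1) div 2)"
  have "x = s * d * (c * gram_det \<omega> n a b)" using 1(5) len by (simp add: s_def ac_simps)
  also have "\<dots> = s * c' * (d * gram_det \<omega> n a' b)" using eA by (simp add: ac_simps)
  also have "\<dots> = s * c' * (d' * gram_det \<omega> n a' b')" using eB by simp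
  also have "\<dots> = y" using 2(5) len by (simp add: s_def ac_simps)
  finally show ?thesis .
qed

lemma omega_wedge_eq:
  assumes sf: "symplectic_form scale \<omega>"
    and lenA: "\<And>a. basis_list scale (fst A) a \<Longrightarrow> length a = n"
    and lenB: "\<And>b. basis_list scale (fst B) b \<Longrightarrow> length b = n"
    and A: "snd A = (\<lambda>\<phi>. c * wedge scale (fst A) a \<phi>)" "basis_list scale (fst A) a"
    and B: "snd B = (\<lambda>\<phi>. d * wedge scale (fst B) b \<phi>)" "basis_list scale (fst B) b"
  shows "omega_wedge scale \<omega> A B = c * d * (-1) ^ (n * (n - 1) div 2) * gram_det \<omega> n a b"
proof -
  let ?x = "c * d * (-1) ^ (n * (n - 1) div 2) * gram_det \<omega> n a b"
  have rep: "omega_wedge_rep scale \<omega> A B ?x"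
    unfolding omega_wedge_rep_def using A B lenA[OF A(2)] by blast
  have "omega_wedge scale \<omega> A B = (SOME x. omega_wedge_rep scale \<omega> A B x)"
    by (simp add: omega_wedge_def omega_wedge_rep_def)
  also have "\<dots> = ?x"
    using omega_wedge_rep_unique[OF sf lenA lenB
        someI[where P = "omega_wedge_rep scale \<omega> A B", OF rep] rep] .
  finally show ?thesis .
qed

lemma omega_wedge_neg:
  assumes sf: "symplectic_form scale \<omega>"
    and lenA: "\<And>a. basis_list scale (fst A) a \<Longrightarrow> length a = n"
    and lenB: "\<And>b. basis_list scale (fst B) b \<Longrightarrow> length b = n"
    and A: "snd A \<in> orientations scale (fst A)" and B: "snd B \<in> orientations scale (fst B)"
  shows "omega_wedge scale (\<lambda>u v. - \<omega> u v) A B = (-1) ^ n * omega_wedge scale \<omega> A B"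
proof -
  obtain c a where ca: "snd A = (\<lambda>\<phi>. c * wedge scale (fst A) a \<phi>)" "basis_list scale (fst A) a"
    using A unfolding orientations_def by blast
  obtain d b where db: "snd B = (\<lambda>\<phi>. d * wedge scale (fst B) b \<phi>)" "basis_list scale (fst B) b"
    using B unfolding orientations_def by blast
  have "omega_wedge scale (\<lambda>u v. - \<omega> u v) A B
      = c * d * (-1) ^ (n * (n - 1) div 2) * gram_det (\<lambda>u v. - \<omega> u v) n a b"
    by (rule omega_wedge_eq[OF symplectic_form_neg[OF sf] lenA lenB ca db])
  moreover have "omega_wedge scale \<omega> A B = c * d * (-1) ^ (n * (n - 1) div 2) * gram_det \<omega> n a b"
    by (rule omega_wedge_eq[OF sf lenA lenB ca db])
  ultimately show ?thesis by (simp add: gram_det_neg ac_simps)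
qed

lemma legendre_power:
  fixes x :: "'k::{field,finite}"
  shows "legendre_char (x ^ n) = legendre_char x ^ n"
proof (induction n)
  case 0
  have "legendre_char (1::'k) = 1" unfolding legendre_char_def by (metis mult_1 one_neq_zero)
  then show ?case by simp
next
  case (Suc n)
  then show ?case by (simp add: legendre_mult)
qed

text \<open>
  Conjugation by r^* sends the operator T^0 of (V-bar, psi) to the operator T^0 of (V, psi^-1) for
  transversal Lagrangians: the summations correspond, and the factors sigma(-1)^n from the Gauss
  sum and from omega_wedge cancel.
\<close>

lemma T0_rstar:
  fixes scale :: "'k::{field,finite} \<Rightarrow> 'v::{ab_group_add,finite} \<Rightarrow> 'v"
  assumes two: "(2::'k) \<noteq> 0" and vs: "vector_space scale" and sf: "symplectic_form scale \<omega>"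
    and \<psi>: "nontrivial_char \<psi>" and M: "Mo \<in> OLag scale \<omega>" and L: "Lo \<in> OLag scale \<omega>"
    and s: "sum_is_all (fst Mo) (fst Lo)"
  shows "rstar (T0 scale (\<lambda>u v. - \<omega> u v) \<psi> Mo Lo (rstar f))
       = T0 scale \<omega> (\<lambda>z. inverse (\<psi> z)) Mo Lo f"
proof -
  define n where "n = half_dim scale"
  define q :: complex where "q = of_nat (card (UNIV :: 'k set))"
  define \<epsilon> :: 'k where "\<epsilon> = (-1) ^ (n * (n - 1) div 2)"
  define X where "X = omega_wedge scale \<omega> Lo Mo"
  have lag: "lagrangian scale \<omega> (fst Lo)" "snd Lo \<in> orientations scale (fst Lo)"
    "lagrangian scale \<omega> (fst Mo)" "snd Mo \<in> orientations scale (fst Mo)"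
    using L M by (auto simp: OLag_def)
  have len: "length a = n" if "basis_list scale (fst Mo) a \<or> basis_list scale (fst Lo) a" for a
    unfolding n_def by (rule general_position_basis_length[OF vs sf lag(3,1) s that])
  have "omega_wedge scale (\<lambda>u v. - \<omega> u v) Lo Mo = (-1) ^ n * X"
    unfolding X_def by (rule omega_wedge_neg[OF sf _ _ lag(2,4)]) (simp_all add: len)
  then have "legendre_char (\<epsilon> * omega_wedge scale (\<lambda>u v. - \<omega> u v) Lo Mo)
      = legendre_char (-1::'k) ^ n * legendre_char (\<epsilon> * X)"
    by (simp add: legendre_mult legendre_power)
  then have const:
    "(gauss1 \<psi> / q) ^ n * legendre_char (\<epsilon> * omega_wedge scale (\<lambda>u v. - \<omega> u v) Lo Mo)
      = (gauss1 (\<lambda>z. inverse (\<psi> z)) / q) ^ n * legendre_char (\<epsilon> * X)"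
    by (simp add: gauss1_inverse_char[OF two \<psi>] power_mult_distrib power_divide)
  show ?thesis
  proof (rule ext)
    fix h :: "'v \<times> 'k"
    obtain v t where h: "h = (v, t)" by (cases h)
    have "(\<Sum>m\<in>fst Mo. rstar f (hmul (\<lambda>u v. - \<omega> u v) (m, 0) (v, - t)))
        = (\<Sum>m\<in>fst Mo. f (hmul \<omega> (m, 0) (v, t)))"
      by (rule sum.cong) (auto simp: hmul_def ac_simps)
    then show "rstar (T0 scale (\<lambda>u v. - \<omega> u v) \<psi> Mo Lo (rstar f)) h
        = T0 scale \<omega> (\<lambda>z. inverse (\<psi> z)) Mo Lo f h"
      using const
      unfolding h T0_def n_def[symmetric] q_def[symmetric] \<epsilon>_def[symmetric] X_def[symmetric]
      by simp
  qed
qed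

text \<open>
  The conjugate of T-bar is a trivialization for (V, psi^-1), so it coincides with the canonical
  one T; since r^* is an involution this is the claim.
\<close>

theorem mainTheorem11:
  fixes scale :: "'k::{field,finite} \<Rightarrow> 'v::{ab_group_add,finite} \<Rightarrow> 'v"
    and \<omega> :: "'v \<Rightarrow> 'v \<Rightarrow> 'k"
    and \<psi> :: "'k \<Rightarrow> complex"
    and Tbar T :: "('v, 'k) family"
    and Mo Lo :: "('v, 'k) olag"
  assumes "(2::'k) \<noteq> 0"
    and "vector_space scale"
    and "symplectic_form scale \<omega>"
    and "nontrivial_char \<psi>"
    and "canonical_trivialization scale (\<lambda>u v. - \<omega> u v) \<psi> Tbar"
    and "canonical_trivialization scale \<omega> (\<lambda>z. inverse (\<psi> z)) T"
    and "Mo \<in> OLag scale \<omega>"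
    and "Lo \<in> OLag scale \<omega>"
  shows "\<forall>f \<in> Hsp (\<lambda>u v. - \<omega> u v) \<psi> (fst Lo). rstar (Tbar Mo Lo f) = T Mo Lo (rstar f)"
proof -
  have \<omega>0: "\<And>x. \<omega> 0 x = 0" by (rule symplectic_formD(5)[OF assms(3)])
  have \<psi>: "\<And>z. \<psi> z = inverse (\<psi> (- z))" by (simp add: char_inverse[OF assms(4)])
  have Tbar: "trivialization_props scale (\<lambda>u v. - \<omega> u v) \<psi> Tbar"
    using assms(5) unfolding canonical_trivialization_def by blast
  have "trivialization_props scale \<omega> (\<lambda>z. inverse (\<psi> z))
      (\<lambda>Mo Lo f. rstar (Tbar Mo Lo (rstar f)))"
    by (rule trivialization_props_rstar[OF \<omega>0 _ \<psi> Tbar T0_rstar[OF assms(1-4)]]) simp_all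
  then have unique:
    "\<forall>g \<in> Hsp \<omega> (\<lambda>z. inverse (\<psi> z)) (fst Lo). rstar (Tbar Mo Lo (rstar g)) = T Mo Lo g"
    using assms(6-8) unfolding canonical_trivialization_def by blast
  show ?thesis
  proof
    fix f assume f: "f \<in> Hsp (\<lambda>u v. - \<omega> u v) \<psi> (fst Lo)"
    have "rstar f \<in> Hsp \<omega> (\<lambda>z. inverse (\<psi> z)) (fst Lo)"
      by (rule rstar_Hsp[OF _ _ _ f]) (simp_all add: \<omega>0 char_inverse[OF assms(4)])
    then show "rstar (Tbar Mo Lo f) = T Mo Lo (rstar f)" using unique by auto
  qed
qed

end
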